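(* Let $f_1,\dots,f_n\in\mathbb{Z}[x_1,\dots,x_n,y_1,\dots,y_n,z_1,\dots,z_r]$ and for $\overline{z}\in\mathbb{C}^r$ let $F_{\overline{z}}:\mathbb{C}^n\times\mathbb{C}^n\to\mathbb{C}^n$ be the map $(\overline{x},\overline{y})\mapsto(f_1,\dots,f_n)(\overline{x},\overline{y},\overline{z})$. The set of $\overline{z}\in\mathbb{C}^r$ such that $F_{\overline{z}}$ has a balanced zero is an open subset of $\mathbb{C}^r$. Likewise, the set of $\overline{z}\in\mathbb{C}^r$ such that $F_{\overline{z}}$ has a well balanced zero is an open subset of $\mathbb{C}^r$.
   Context: A zero $(\overline{a},\overline{b})$ of a polynomial map $G:\mathbb{C}^n\times\mathbb{C}^n\to\mathbb{C}^n$ is a balanced zero if (1) $a_1,\dots,a_n$ are nonzero and pairwise distinct, and (2) there is a partition $I\sqcup J=\{1,\dots,n\}$ such that the $n\times n$ Jacobian matrix of $G$ with respect to the variables $(x_i)_{i\in I}$ and $(y_j)_{j\in J}$ is nonsingular at $(\overline{a},\overline{b})$. It is a well balanced zero if moreover (3) the tangent space $(\overline{a},\overline{b})+\ker DG(\overline{a},\overline{b})$ is not contained in any hyperplane $\{x_i=c\}$ with $i\in\{1,\dots,n\}$, $c\in\mathbb{C}$. *)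

theory Defs
  imports "HOL-Analysis.Analysis"
begin

text \<open>The index sets
  {1..n} and {1..r} are the finite types 'n and 'r.\<close>

datatype ('n, 'r) ipoly =
    Const int
  | X 'n
  | Y 'n
  | Z 'r
  | Add "('n, 'r) ipoly" "('n, 'r) ipoly"
  | Mul "('n, 'r) ipoly" "('n, 'r) ipoly"

primrec peval :: "('n, 'r) ipoly \<Rightarrow> complex^'n \<Rightarrow> complex^'n \<Rightarrow> complex^'r \<Rightarrow> complex" where
  "peval (Const c) x y z = of_int c"
| "peval (X i) x y z = x $ i"
| "peval (Y i) x y z = y $ i"
| "peval (Z k) x y z = z $ k"
| "peval (Add p q) x y z = peval p x y z + peval q x y z"
| "peval (Mul p q) x y z = peval p x y z * peval q x y z"

definition Fmap :: "('n \<Rightarrow> ('n, 'r) ipoly) \<Rightarrow> complex^'r \<Rightarrow> complex^'n \<Rightarrow> complex^'n \<Rightarrow> complex^'n" where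
  "Fmap f z x y = (\<chi> k. peval (f k) x y z)"

definition dX :: "('n, 'r) ipoly \<Rightarrow> complex^'r \<Rightarrow> complex^'n \<Rightarrow> complex^'n \<Rightarrow> 'n \<Rightarrow> complex" where
  "dX p z x y j = deriv (\<lambda>t. peval p (\<chi> i. if i = j then t else x $ i) y z) (x $ j)"

definition dY :: "('n, 'r) ipoly \<Rightarrow> complex^'r \<Rightarrow> complex^'n \<Rightarrow> complex^'n \<Rightarrow> 'n \<Rightarrow> complex" where
  "dY p z x y j = deriv (\<lambda>t. peval p x (\<chi> i. if i = j then t else y $ i) z) (y $ j)"

text \<open>Jacobian of F_z w.r.t. the variables (x_i)_{i in I} and (y_j)_{j not in I}:
  column j is d/dx_j if j in I, else d/dy_j (J = complement of I).\<close>
definition jac_IJ :: "('n \<Rightarrow> ('n, 'r) ipoly) \<Rightarrow> complex^'r \<Rightarrow> 'n set \<Rightarrow> complex^'n \<Rightarrow> complex^'n \<Rightarrow> complex^'n^'n" where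
  "jac_IJ f z I a b = (\<chi> k j. if j \<in> I then dX (f k) z a b j else dY (f k) z a b j)"

definition DF :: "('n \<Rightarrow> ('n, 'r) ipoly) \<Rightarrow> complex^'r \<Rightarrow> complex^'n \<Rightarrow> complex^'n \<Rightarrow> (complex^'n) \<times> (complex^'n) \<Rightarrow> complex^'n" where
  "DF f z a b uv = (\<chi> k. (\<Sum>j\<in>UNIV. dX (f k) z a b j * fst uv $ j + dY (f k) z a b j * snd uv $ j))"

definition balanced_zero :: "('n \<Rightarrow> ('n, 'r) ipoly) \<Rightarrow> complex^'r \<Rightarrow> complex^'n \<Rightarrow> complex^'n \<Rightarrow> bool" where
  "balanced_zero f z a b \<longleftrightarrow>
     Fmap f z a b = 0 \<and>
     (\<forall>i. a $ i \<noteq> 0) \<and> (\<forall>i j. a $ i = a $ j \<longrightarrow> i = j) \<and>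
     (\<exists>I. invertible (jac_IJ f z I a b))"

definition well_balanced_zero :: "('n \<Rightarrow> ('n, 'r) ipoly) \<Rightarrow> complex^'r \<Rightarrow> complex^'n \<Rightarrow> complex^'n \<Rightarrow> bool" where
  "well_balanced_zero f z a b \<longleftrightarrow>
     balanced_zero f z a b \<and>
     (\<forall>i c. \<not> ((\<lambda>uv. (a, b) + uv) ` {uv. DF f z a b uv = 0} \<subseteq> {p. fst p $ i = c}))"

end

theory Submission
  imports Defs
begin

text \<open>At a balanced zero \<open>(a\<^sub>0, b\<^sub>0)\<close> of \<open>F\<^sub>z\<^sub>0\<close> whose Jacobian in the variables
  \<open>x\<^sub>I, y\<^sub>J\<close> is nonsingular, the implicit function theorem continues the zero to a continuous
  branch \<open>(a(z), b(z))\<close> of zeros of \<open>F\<^sub>z\<close> for \<open>z\<close> near \<open>z\<^sub>0\<close>. Along the branch, nonvanishing and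
  distinctness of the \<open>a\<^sub>i\<close> and nonsingularity of the Jacobian \<open>M\<close> are open conditions.
  The tangent space is the kernel of \<open>DF\<close>, i.e. the graph \<open>h = - M\<^sup>-\<^sup>1 C h'\<close> over the other
  variables \<open>h'\<close>. It escapes every hyperplane \<open>x\<^sub>i = c\<close> with \<open>i \<notin> I\<close> automatically, and one
  with \<open>i \<in> I\<close> iff row \<open>i\<close> of \<open>M\<^sup>-\<^sup>1 C\<close> is nonzero, which by Cramer's rule is the nonvanishing
  of one of finitely many determinants depending continuously on \<open>z\<close>.\<close>

section \<open>Analysis\<close>

lemma inverse_function_theorem_pointwise:
  fixes f :: "'a::euclidean_space \<Rightarrow> 'a" and f' :: "'a \<Rightarrow> 'a \<Rightarrow> 'a"
  assumes der: "\<And>x. (f has_derivative f' x) (at x)"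
    and cont: "\<And>v. continuous_on UNIV (\<lambda>x. f' x v)"
    and inj: "\<And>v. f' x0 v = 0 \<Longrightarrow> v = 0"
  obtains U V g where "open U" "x0 \<in> U" "open V" "f x0 \<in> V" "homeomorphism U V f g"
proof -
  have lin: "linear (f' x)" for x
    using der has_derivative_linear by blast
  define F where "F x = Blinfun (f' x)" for x
  have F: "blinfun_apply (F x) = f' x" for x
    unfolding F_def using lin by (simp add: bounded_linear_Blinfun_apply linear_conv_bounded_linear)
  have contF: "continuous_on UNIV F"
    by (rule continuous_on_blinfun_componentwise) (simp add: F cont)
  obtain g where g: "linear g" "g \<circ> f' x0 = id"
    using linear_injective_left_inverse[OF lin] inj lin linear_injective_0 by blast
  then have invF: "Blinfun g o\<^sub>L F x0 = id_blinfun"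
    by (intro blinfun_eqI)
      (simp add: F bounded_linear_Blinfun_apply linear_conv_bounded_linear pointfree_idE)
  show ?thesis
    by (rule inverse_function_theorem[of UNIV f F x0 "Blinfun g"]) (simp_all add: F der contF invF that)
qed

lemma continuous_implicit_function:
  fixes H :: "'a::euclidean_space \<times> 'b::euclidean_space \<Rightarrow> 'b"
    and H' :: "'a \<times> 'b \<Rightarrow> 'a \<times> 'b \<Rightarrow> 'b"
  assumes der: "\<And>s. (H has_derivative H' s) (at s)"
    and cont: "\<And>v. continuous_on UNIV (\<lambda>s. H' s v)"
    and zero: "H (z0, w0) = 0"
    and inj: "\<And>h. H' (z0, w0) (0, h) = 0 \<Longrightarrow> h = 0"
  obtains U W where "open U" "z0 \<in> U" "continuous_on U W" "W z0 = w0"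
    "\<And>z. z \<in> U \<Longrightarrow> H (z, W z) = 0"
proof -
  define \<Phi> where "\<Phi> s = (fst s, H s)" for s
  define \<Phi>' where "\<Phi>' s v = (fst v, H' s v)" for s v
  have "(\<Phi> has_derivative \<Phi>' s) (at s)" for s
    unfolding \<Phi>_def[abs_def] \<Phi>'_def[abs_def]
    by (intro has_derivative_Pair has_derivative_fst has_derivative_ident der)
  moreover have "continuous_on UNIV (\<lambda>s. \<Phi>' s v)" for v
    unfolding \<Phi>'_def by (intro continuous_intros cont)
  moreover have "v = 0" if "\<Phi>' (z0, w0) v = 0" for v
    using that inj[of "snd v"] by (cases v) (simp add: \<Phi>'_def zero_prod_def)
  ultimately obtain U' V \<Psi> where "open V" "\<Phi> (z0, w0) \<in> V" and U': "(z0, w0) \<in> U'"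
    and hom: "homeomorphism U' V \<Phi> \<Psi>"
    by (rule inverse_function_theorem_pointwise)
  define U where "U = (\<lambda>z. (z, 0)) -` V"
  define W where "W z = snd (\<Psi> (z, 0))" for z
  have \<Phi>\<Psi>: "\<Phi> (\<Psi> (z, 0)) = (z, 0)" if "z \<in> U" for z
    using hom that unfolding U_def homeomorphism_def by auto
  show ?thesis
  proof
    show "open U"
      unfolding U_def by (rule continuous_open_vimage[OF \<open>open V\<close>]) (intro continuous_intros)
    show "z0 \<in> U"
      using \<open>\<Phi> (z0, w0) \<in> V\<close> zero by (simp add: U_def \<Phi>_def)
    show "continuous_on U W"
    proof -
      have "continuous_on U (\<lambda>z. \<Psi> (z, 0))"
        using hom unfolding U_def homeomorphism_def
        by (intro continuous_on_compose2[of V \<Psi>, OF _ continuous_on_Pair]) auto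
      then show ?thesis
        unfolding W_def by (rule continuous_on_snd)
    qed
    show "W z0 = w0"
    proof -
      have "\<Psi> (\<Phi> (z0, w0)) = (z0, w0)"
        using hom U' unfolding homeomorphism_def by blast
      then show ?thesis
        using zero by (simp add: W_def \<Phi>_def)
    qed
    show "H (z, W z) = 0" if "z \<in> U" for z
    proof -
      have "\<Psi> (z, 0) = (z, W z)" "H (\<Psi> (z, 0)) = 0"
        using \<Phi>\<Psi>[OF that] unfolding W_def \<Phi>_def by (auto simp: prod_eq_iff)
      then show ?thesis by simp
    qed
  qed
qed

lemma has_derivative_vec_lambda:
  fixes f :: "'a::euclidean_space \<Rightarrow> 'i::finite \<Rightarrow> 'b::real_normed_vector"
  assumes "\<And>i. ((\<lambda>x. f x i) has_derivative (\<lambda>h. f' h i)) (at x within S)"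
  shows "((\<lambda>x. \<chi> i. f x i) has_derivative (\<lambda>h. \<chi> i. f' h i)) (at x within S)"
proof -
  have "linear (\<lambda>h. \<chi> i. f' h i)"
    using assms[THEN has_derivative_linear]
    by (simp add: linear_iff vec_eq_iff linear_add linear_scale)
  moreover have "((\<lambda>y. \<chi> i. (f y i - f x i - f' (y - x) i) /\<^sub>R norm (y - x)) \<longlongrightarrow> 0)
      (at x within S)"
    unfolding zero_vec_def using assms
    by (intro tendsto_vec_lambda) (simp add: has_derivative_at_within)
  moreover have "(\<lambda>y. ((\<chi> i. f y i) - (\<chi> i. f x i) - (\<chi> i. f' (y - x) i)) /\<^sub>R norm (y - x)) =
      (\<lambda>y. \<chi> i. (f y i - f x i - f' (y - x) i) /\<^sub>R norm (y - x))"
    by (simp add: fun_eq_iff vec_eq_iff)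
  ultimately show ?thesis
    unfolding has_derivative_at_within by (simp add: linear_conv_bounded_linear)
qed

lemma has_derivative_coordinate_update:
  fixes x :: "'a::euclidean_space ^ 'n"
  shows "((\<lambda>t. \<chi> i. if i = j then t else x $ i) has_derivative axis j) (at s within S)"
proof -
  have "((\<lambda>t. if i = j then t else x $ i) has_derivative (\<lambda>h. if i = j then h else 0))
      (at s within S)" for i
    by (cases "i = j") auto
  then have "((\<lambda>t. \<chi> i. if i = j then t else x $ i) has_derivative (\<lambda>h. \<chi> i. if i = j then h else 0))
      (at s within S)"
    by (rule has_derivative_vec_lambda[where f="\<lambda>t i. if i = j then t else x $ i"])
  then show ?thesis
    unfolding axis_def[abs_def] .
qed

lemma continuous_on_det:
  fixes A :: "'a::topological_space \<Rightarrow> 'b::real_normed_field^'n^'n"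
  assumes "\<And>i j. continuous_on S (\<lambda>x. A x $ i $ j)"
  shows "continuous_on S (\<lambda>x. det (A x))"
  unfolding det_def
  by (intro continuous_on_sum continuous_on_mult continuous_on_const continuous_on_prod assms)

lemma open_Collect_nonzero_on:
  fixes g :: "'a::topological_space \<Rightarrow> 'b::{t1_space, zero}"
  assumes "continuous_on S g" "open S"
  shows "open {x \<in> S. g x \<noteq> 0}"
proof -
  have "{x \<in> S. g x \<noteq> 0} = S \<inter> g -` (- {0})"
    by auto
  then show ?thesis
    using continuous_open_preimage[OF assms, of "- {0}"] by auto
qed

section \<open>Vectors and matrices\<close>

lemma sum_mult_axis_one_nth: "(\<Sum>j\<in>UNIV. c j * axis j (1::'a::semiring_1) $ i) = c i"
proof -
  have eq: "(\<lambda>j. c j * axis j 1 $ i) = (\<lambda>j. if j = i then c i else 0)"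
    by (auto simp: axis_def)
  show ?thesis
    unfolding eq by simp
qed

lemma sum_axis_nth_mult: "(\<Sum>j\<in>UNIV. axis i c $ j * d j) = c * (d i :: 'a::semiring_1)"
proof -
  have eq: "(\<lambda>j. axis i c $ j * d j) = (\<lambda>j. if j = i then c * d i else 0)"
    by (auto simp: axis_def)
  show ?thesis
    unfolding eq by simp
qed

definition vec_merge :: "'i set \<Rightarrow> 'a^'i \<Rightarrow> 'a^'i \<Rightarrow> 'a^'i" where
  "vec_merge I u v = (\<chi> i. if i \<in> I then u $ i else v $ i)"

lemma vec_merge_simps [simp]:
  "vec_merge I u u = u"
  "vec_merge I (vec_merge I u v) w = vec_merge I u w"
  "vec_merge I u (vec_merge I v w) = vec_merge I u w"
  by (simp_all add: vec_merge_def vec_eq_iff)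

lemma has_derivative_vec_merge:
  fixes g h :: "'a::euclidean_space \<Rightarrow> 'b::real_normed_vector^'i"
  assumes "(g has_derivative g') (at s within S)" "(h has_derivative h') (at s within S)"
  shows "((\<lambda>s. vec_merge I (g s) (h s)) has_derivative (\<lambda>v. vec_merge I (g' v) (h' v)))
    (at s within S)"
proof -
  have "((\<lambda>s. if i \<in> I then g s $ i else h s $ i) has_derivative
      (\<lambda>v. if i \<in> I then g' v $ i else h' v $ i)) (at s within S)" for i
    using assms[THEN bounded_linear.has_derivative[OF bounded_linear_vec_nth]]
    by (cases "i \<in> I") auto
  then show ?thesis
    unfolding vec_merge_def
    by (rule has_derivative_vec_lambda[where f="\<lambda>s i. if i \<in> I then g s $ i else h s $ i"])
qed

lemma continuous_on_vec_merge:
  assumes "continuous_on S g" "continuous_on S h"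
  shows "continuous_on S (\<lambda>s. vec_merge I (g s) (h s))"
proof -
  have "continuous_on S (\<lambda>s. if i \<in> I then g s $ i else h s $ i)" for i
    using assms by (cases "i \<in> I") (auto intro: continuous_on_component)
  then show ?thesis
    unfolding vec_merge_def by (rule continuous_on_vec_lambda)
qed

definition replace_column :: "'a^'n^'m \<Rightarrow> 'n \<Rightarrow> 'a^'m \<Rightarrow> 'a^'n^'m" where
  "replace_column A k v = (\<chi> i j. if j = k then v $ i else A $ i $ j)"

lemma replace_column_nth [simp]:
  "replace_column A k v $ i $ j = (if j = k then v $ i else A $ i $ j)"
  by (simp add: replace_column_def)

lemma matrix_vector_mult_axis_one: "(A :: 'a::comm_semiring_1^'n^'m) *v axis k 1 = column k A"
  by (simp add: vec_eq_iff matrix_vector_mult_def column_def mult.commute[of "A $ _ $ _"]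
      sum_axis_nth_mult)

lemma matrix_vector_mult_uminus: "(A :: 'a::comm_ring_1^'n^'m) *v (- x) = - (A *v x)"
  by (simp add: vec_eq_iff matrix_vector_mult_def sum_negf)

lemma det_replace_column_matrix_mul:
  fixes M P :: "'a::field^'n^'n"
  shows "det (replace_column M i (column j (M ** P))) = P $ i $ j * det M"
proof -
  have "column j (M ** P) = M *v column j P"
    by (metis matrix_vector_mul_assoc matrix_vector_mult_axis_one)
  then have "det (replace_column M i (column j (M ** P))) = column j P $ i * det M"
    unfolding replace_column_def by (simp only: cramer_lemma)
  then show ?thesis
    by (simp add: column_def)
qed

lemma ex_matrix_vector_mult_nth_nonzero_iff:
  fixes P :: "'a::comm_semiring_1^'n^'m"
  shows "(\<exists>v. (P *v v) $ i \<noteq> 0) \<longleftrightarrow> (\<exists>j. P $ i $ j \<noteq> 0)"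
proof
  assume "\<exists>v. (P *v v) $ i \<noteq> 0"
  then obtain v where "(\<Sum>j\<in>UNIV. P $ i $ j * v $ j) \<noteq> 0"
    by (auto simp: matrix_vector_mult_def)
  then show "\<exists>j. P $ i $ j \<noteq> 0"
    by (rule contrapos_np) simp
next
  assume "\<exists>j. P $ i $ j \<noteq> 0"
  then obtain j where "P $ i $ j \<noteq> 0" ..
  then show "\<exists>v. (P *v v) $ i \<noteq> 0"
    by (intro exI[of _ "axis j 1"]) (simp add: matrix_vector_mult_axis_one column_def)
qed

text \<open>For invertible \<open>M\<close> the kernel of \<open>(h, h') \<mapsto> M h + C h'\<close> is the graph of
  \<open>h = - M\<^sup>-\<^sup>1 C h'\<close>, and Cramer's rule expresses the entries of \<open>M\<^sup>-\<^sup>1 C\<close> by determinants.\<close>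

lemma kernel_coordinate_nonzero_iff:
  fixes M C :: "'a::field^'n^'n"
  assumes "invertible M"
  shows "(\<exists>h h'. M *v h + C *v h' = 0 \<and> h $ i \<noteq> 0) \<longleftrightarrow>
    (\<exists>j. det (replace_column M i (column j C)) \<noteq> 0)"
proof -
  obtain B where B: "M ** B = mat 1" "B ** M = mat 1"
    using assms unfolding invertible_def by blast
  define P where "P = B ** C"
  have MP: "M ** P = C"
    unfolding P_def by (simp add: matrix_mul_assoc B)
  have kernel: "M *v h + C *v h' = 0 \<longleftrightarrow> h = - (P *v h')" for h h'
  proof
    assume "M *v h + C *v h' = 0"
    then have "B *v (M *v h + C *v h') = 0"
      by simp
    then show "h = - (P *v h')"
      by (simp add: matrix_vector_right_distrib matrix_vector_mul_assoc B P_def eq_neg_iff_add_eq_0)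
  qed (simp add: matrix_vector_mul_assoc MP matrix_vector_mult_uminus)
  have "(\<exists>h h'. M *v h + C *v h' = 0 \<and> h $ i \<noteq> 0) \<longleftrightarrow> (\<exists>h'. (P *v h') $ i \<noteq> 0)"
    by (auto simp: kernel)
  also have "\<dots> \<longleftrightarrow> (\<exists>j. P $ i $ j \<noteq> 0)"
    by (rule ex_matrix_vector_mult_nth_nonzero_iff)
  also have "\<dots> \<longleftrightarrow> (\<exists>j. det (replace_column M i (column j C)) \<noteq> 0)"
    using assms det_replace_column_matrix_mul[of M i _ P] by (simp add: MP invertible_det_nz)
  finally show ?thesis .
qed

lemma invertible_kernel_exists:
  fixes M C :: "'a::field^'n^'n"
  assumes "invertible M"
  shows "\<exists>h. M *v h + C *v h' = 0"
proof -
  obtain B where "M ** B = mat 1"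
    using assms unfolding invertible_def by blast
  then have "M *v (- (B *v (C *v h'))) + C *v h' = 0"
    by (simp add: matrix_vector_mult_uminus matrix_vector_mul_assoc matrix_mul_assoc)
  then show ?thesis ..
qed

lemma translate_not_in_coordinate_hyperplane_iff:
  fixes p :: "('a::ab_group_add^'n) \<times> ('b::ab_group_add)"
  assumes "0 \<in> K"
  shows "(\<forall>c. \<not> (\<lambda>v. p + v) ` K \<subseteq> {q. fst q $ i = c}) \<longleftrightarrow> (\<exists>v\<in>K. fst v $ i \<noteq> 0)"
proof
  assume "\<forall>c. \<not> (\<lambda>v. p + v) ` K \<subseteq> {q. fst q $ i = c}"
  then obtain v where "v \<in> K" "fst (p + v) $ i \<noteq> fst p $ i"
    by blast
  then show "\<exists>v\<in>K. fst v $ i \<noteq> 0"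
    by auto
next
  assume "\<exists>v\<in>K. fst v $ i \<noteq> 0"
  then obtain v where v: "v \<in> K" "fst v $ i \<noteq> 0"
    by blast
  show "\<forall>c. \<not> (\<lambda>v. p + v) ` K \<subseteq> {q. fst q $ i = c}"
  proof (intro allI notI)
    fix c
    assume "(\<lambda>v. p + v) ` K \<subseteq> {q. fst q $ i = c}"
    then have "fst (p + 0) $ i = c" "fst (p + v) $ i = c"
      using assms v(1) by blast+
    then show False
      using v(2) by simp
  qed
qed

section \<open>Polynomial maps and their derivatives\<close>

primrec peval_deriv :: "('n, 'r) ipoly \<Rightarrow> complex^'n \<Rightarrow> complex^'n \<Rightarrow> complex^'r \<Rightarrow>
    complex^'n \<Rightarrow> complex^'n \<Rightarrow> complex^'r \<Rightarrow> complex" where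
  "peval_deriv (Const c) x y z u v w = 0"
| "peval_deriv (X i) x y z u v w = u $ i"
| "peval_deriv (Y i) x y z u v w = v $ i"
| "peval_deriv (Z k) x y z u v w = w $ k"
| "peval_deriv (Add p q) x y z u v w = peval_deriv p x y z u v w + peval_deriv q x y z u v w"
| "peval_deriv (Mul p q) x y z u v w =
     peval_deriv p x y z u v w * peval q x y z + peval p x y z * peval_deriv q x y z u v w"

lemma has_derivative_peval:
  assumes "(xf has_derivative xf') (at s within S)"
    and "(yf has_derivative yf') (at s within S)"
    and "(zf has_derivative zf') (at s within S)"
  shows "((\<lambda>s. peval p (xf s) (yf s) (zf s)) has_derivative
     (\<lambda>h. peval_deriv p (xf s) (yf s) (zf s) (xf' h) (yf' h) (zf' h))) (at s within S)"
proof (induction p)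
  case (Mul p q)
  then show ?case
    by (auto intro!: has_derivative_eq_rhs[OF has_derivative_mult[OF Mul.IH]] simp: algebra_simps)
qed (auto intro: has_derivative_add bounded_linear.has_derivative[OF bounded_linear_vec_nth] assms)

lemma continuous_on_peval:
  assumes "continuous_on S xf" "continuous_on S yf" "continuous_on S zf"
  shows "continuous_on S (\<lambda>s. peval p (xf s) (yf s) (zf s))"
  by (induction p) (auto intro!: continuous_intros assms)

lemma continuous_on_peval_deriv:
  assumes "continuous_on S xf" "continuous_on S yf" "continuous_on S zf"
    "continuous_on S uf" "continuous_on S vf" "continuous_on S tf"
  shows "continuous_on S (\<lambda>s. peval_deriv p (xf s) (yf s) (zf s) (uf s) (vf s) (tf s))"
  by (induction p) (auto intro!: continuous_intros assms continuous_on_peval)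

lemma peval_deriv_expand:
  "peval_deriv p x y z u v w =
     (\<Sum>j\<in>UNIV. u $ j * peval_deriv p x y z (axis j 1) 0 0) +
     (\<Sum>j\<in>UNIV. v $ j * peval_deriv p x y z 0 (axis j 1) 0) +
     (\<Sum>k\<in>UNIV. w $ k * peval_deriv p x y z 0 0 (axis k 1))"
proof (induction p)
  case (Mul p q)
  show ?case
    by (simp add: Mul.IH algebra_simps sum_distrib_left sum_distrib_right sum.distrib)
qed (simp_all add: sum_mult_axis_one_nth sum.distrib algebra_simps)

lemma dX_eq_peval_deriv: "dX p z x y j = peval_deriv p x y z (axis j 1) 0 0"
proof -
  have x: "(\<chi> i. if i = j then x $ j else x $ i) = x"
    by (simp add: vec_eq_iff)
  have deriv: "((\<lambda>t. peval p (\<chi> i. if i = j then t else x $ i) y z) has_derivative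
      (\<lambda>h. peval_deriv p x y z (axis j h) 0 0)) (at (x $ j))"
    using has_derivative_peval[OF
        has_derivative_coordinate_update[where j=j and x=x and s="x $ j" and S=UNIV]
        has_derivative_const[where c=y] has_derivative_const[where c=z], where p=p]
    unfolding x .
  have homogeneous: "(\<lambda>h. peval_deriv p x y z (axis j h) 0 0) = (*) (peval_deriv p x y z (axis j 1) 0 0)"
  proof
    show "peval_deriv p x y z (axis j h) 0 0 = peval_deriv p x y z (axis j 1) 0 0 * h" for h
      by (subst (1 2) peval_deriv_expand) (simp add: sum_axis_nth_mult)
  qed
  have "((\<lambda>t. peval p (\<chi> i. if i = j then t else x $ i) y z) has_field_derivative
      peval_deriv p x y z (axis j 1) 0 0) (at (x $ j))"
    using homogeneous deriv by (simp add: has_field_derivative_def)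
  then show ?thesis
    unfolding dX_def by (rule DERIV_imp_deriv)
qed

lemma dY_eq_peval_deriv: "dY p z x y j = peval_deriv p x y z 0 (axis j 1) 0"
proof -
  have y: "(\<chi> i. if i = j then y $ j else y $ i) = y"
    by (simp add: vec_eq_iff)
  have deriv: "((\<lambda>t. peval p x (\<chi> i. if i = j then t else y $ i) z) has_derivative
      (\<lambda>h. peval_deriv p x y z 0 (axis j h) 0)) (at (y $ j))"
    using has_derivative_peval[OF has_derivative_const[where c=x]
        has_derivative_coordinate_update[where j=j and x=y and s="y $ j" and S=UNIV]
        has_derivative_const[where c=z], where p=p]
    unfolding y .
  have homogeneous: "(\<lambda>h. peval_deriv p x y z 0 (axis j h) 0) = (*) (peval_deriv p x y z 0 (axis j 1) 0)"
  proof
    show "peval_deriv p x y z 0 (axis j h) 0 = peval_deriv p x y z 0 (axis j 1) 0 * h" for h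
      by (subst (1 2) peval_deriv_expand) (simp add: sum_axis_nth_mult)
  qed
  have "((\<lambda>t. peval p x (\<chi> i. if i = j then t else y $ i) z) has_field_derivative
      peval_deriv p x y z 0 (axis j 1) 0) (at (y $ j))"
    using homogeneous deriv by (simp add: has_field_derivative_def)
  then show ?thesis
    unfolding dY_def by (rule DERIV_imp_deriv)
qed

lemma DF_eq_peval_deriv: "DF f z a b (u, v) = (\<chi> k. peval_deriv (f k) a b z u v 0)"
  by (simp add: DF_def dX_eq_peval_deriv dY_eq_peval_deriv vec_eq_iff
      peval_deriv_expand[of _ a b z u v 0] sum.distrib mult.commute)

lemma continuous_on_jac_IJ:
  assumes "continuous_on S a" "continuous_on S b"
  shows "continuous_on S (\<lambda>z. jac_IJ f z I (a z) (b z) $ k $ j)"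
  unfolding jac_IJ_def dX_eq_peval_deriv dY_eq_peval_deriv
  by (cases "j \<in> I") (auto intro!: continuous_on_peval_deriv continuous_intros assms)

lemma DF_vec_merge:
  "DF f z a b (vec_merge I h h', vec_merge I h' h) =
     jac_IJ f z I a b *v h + jac_IJ f z (- I) a b *v h'"
  by (auto simp: vec_eq_iff DF_def jac_IJ_def vec_merge_def matrix_vector_mult_def
      sum.distrib[symmetric] intro!: sum.cong)

section \<open>Balanced zeros\<close>

text \<open>Solving \<open>F\<^sub>z = 0\<close> for the variables \<open>x\<^sub>i (i \<in> I)\<close>, \<open>y\<^sub>j (j \<notin> I)\<close>, i.e. for
  \<open>w = vec_merge I x y\<close>, with the remaining variables frozen at their values in the given zero.\<close>

lemma Fmap_zero_continuation:
  fixes f :: "'n::finite \<Rightarrow> ('n, 'r::finite) ipoly"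
  assumes zero: "Fmap f z0 a0 b0 = 0" and inv: "invertible (jac_IJ f z0 I a0 b0)"
  obtains U a b where "open U" "z0 \<in> U" "continuous_on U a" "continuous_on U b"
    "a z0 = a0" "b z0 = b0" "\<And>z. z \<in> U \<Longrightarrow> Fmap f z (a z) (b z) = 0"
proof -
  define w0 where "w0 = vec_merge I a0 b0"
  define H where "H s = Fmap f (fst s) (vec_merge I (snd s) a0) (vec_merge I b0 (snd s))"
    for s :: "(complex^'r) \<times> (complex^'n)"
  define H' where "H' s v = (\<chi> k. peval_deriv (f k) (vec_merge I (snd s) a0) (vec_merge I b0 (snd s))
      (fst s) (vec_merge I (snd v) 0) (vec_merge I 0 (snd v)) (fst v))"
    for s v :: "(complex^'r) \<times> (complex^'n)"
  have "(H has_derivative H' s) (at s)" for s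
    unfolding H_def H'_def Fmap_def
    by (intro has_derivative_vec_lambda has_derivative_peval has_derivative_vec_merge
        has_derivative_snd has_derivative_fst has_derivative_ident has_derivative_const)
  moreover have "continuous_on UNIV (\<lambda>s. H' s v)" for v
    unfolding H'_def
    by (intro continuous_on_vec_lambda continuous_on_peval_deriv continuous_on_vec_merge
        continuous_intros)
  moreover have "H (z0, w0) = 0"
    using zero by (simp add: H_def w0_def)
  moreover have "h = 0" if "H' (z0, w0) (0, h) = 0" for h
  proof -
    have "jac_IJ f z0 I a0 b0 *v h = DF f z0 a0 b0 (vec_merge I h 0, vec_merge I 0 h)"
      by (simp add: DF_vec_merge)
    also have "\<dots> = 0"
      using that by (simp add: H'_def DF_eq_peval_deriv w0_def)
    finally show "h = 0"
      using inj_matrix_vector_mult[OF inv] by (metis injD matrix_vector_mult_0_right)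
  qed
  ultimately show ?thesis
  proof (rule continuous_implicit_function)
    fix U W
    assume "open U" "z0 \<in> U" "continuous_on U W" "W z0 = w0" "\<And>z. z \<in> U \<Longrightarrow> H (z, W z) = 0"
    then show ?thesis
      by (intro that[of U "\<lambda>z. vec_merge I (W z) a0" "\<lambda>z. vec_merge I b0 (W z)"])
        (auto simp: w0_def H_def intro: continuous_on_vec_merge)
  qed
qed

text \<open>The three nondegeneracy conditions of a balanced zero are the nonvanishing of a single
  function that is continuous along the branch of zeros.\<close>

lemma balanced_zero_continuation:
  fixes f :: "'n::finite \<Rightarrow> ('n, 'r::finite) ipoly"
  assumes balanced: "balanced_zero f z0 a0 b0" and inv: "invertible (jac_IJ f z0 I a0 b0)"
  obtains U a b where "open U" "z0 \<in> U" "continuous_on U a" "continuous_on U b"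
    "a z0 = a0" "b z0 = b0"
    "\<forall>z\<in>U. balanced_zero f z (a z) (b z) \<and> invertible (jac_IJ f z I (a z) (b z))"
proof -
  have zero: "Fmap f z0 a0 b0 = 0"
    using balanced by (simp add: balanced_zero_def)
  obtain U0 a b where U0: "open U0" "z0 \<in> U0" and cont: "continuous_on U0 a" "continuous_on U0 b"
    and init: "a z0 = a0" "b z0 = b0" and zeros: "\<And>z. z \<in> U0 \<Longrightarrow> Fmap f z (a z) (b z) = 0"
    using Fmap_zero_continuation[OF zero inv] by blast
  define g where "g z = (\<Prod>i\<in>UNIV. a z $ i) * (\<Prod>i\<in>UNIV. \<Prod>j\<in>UNIV - {i}. a z $ i - a z $ j)
      * det (jac_IJ f z I (a z) (b z))" for z
  have g_nonzero_iff: "g z \<noteq> 0 \<longleftrightarrow> (\<forall>i. a z $ i \<noteq> 0) \<and> (\<forall>i j. a z $ i = a z $ j \<longrightarrow> i = j)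
      \<and> invertible (jac_IJ f z I (a z) (b z))" for z
    unfolding g_def invertible_det_nz by (auto simp: prod_zero_iff)
  have "continuous_on U0 g"
    unfolding g_def using cont
    by (intro continuous_on_mult continuous_on_prod continuous_on_diff continuous_on_det
        continuous_on_jac_IJ continuous_on_component)
  then have "open {z \<in> U0. g z \<noteq> 0}"
    using U0(1) by (rule open_Collect_nonzero_on)
  moreover have "z0 \<in> {z \<in> U0. g z \<noteq> 0}"
    using U0(2) balanced inv g_nonzero_iff[of z0] by (simp add: init balanced_zero_def)
  moreover have "balanced_zero f z (a z) (b z) \<and> invertible (jac_IJ f z I (a z) (b z))"
    if "z \<in> {z \<in> U0. g z \<noteq> 0}" for z
    using that zeros g_nonzero_iff[of z] by (auto simp: balanced_zero_def)
  ultimately show ?thesis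
    using cont by (intro that[of "{z \<in> U0. g z \<noteq> 0}" a b]) (auto simp: init elim: continuous_on_subset)
qed

lemma well_balanced_zero_iff:
  "well_balanced_zero f z a b \<longleftrightarrow>
     balanced_zero f z a b \<and> (\<forall>i. \<exists>uv. DF f z a b uv = 0 \<and> fst uv $ i \<noteq> 0)"
proof -
  have "0 \<in> {uv. DF f z a b uv = 0}"
    by (simp add: DF_def zero_vec_def)
  from translate_not_in_coordinate_hyperplane_iff[OF this, of "(a, b)"] show ?thesis
    unfolding well_balanced_zero_def Bex_def mem_Collect_eq by (simp only:)
qed

lemma DF_kernel_coordinate_nonzero_iff:
  assumes inv: "invertible (jac_IJ f z I a b)"
  shows "(\<exists>uv. DF f z a b uv = 0 \<and> fst uv $ i \<noteq> 0) \<longleftrightarrow>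
    (i \<in> I \<longrightarrow> (\<exists>j. det (replace_column (jac_IJ f z I a b) i (column j (jac_IJ f z (- I) a b))) \<noteq> 0))"
proof -
  let ?M = "jac_IJ f z I a b" and ?C = "jac_IJ f z (- I) a b"
  have "(\<exists>uv. DF f z a b uv = 0 \<and> fst uv $ i \<noteq> 0) \<longleftrightarrow>
      (\<exists>h h'. ?M *v h + ?C *v h' = 0 \<and> vec_merge I h h' $ i \<noteq> 0)"
  proof
    assume "\<exists>uv. DF f z a b uv = 0 \<and> fst uv $ i \<noteq> 0"
    then obtain u v where "DF f z a b (u, v) = 0" "u $ i \<noteq> 0"
      by auto
    then show "\<exists>h h'. ?M *v h + ?C *v h' = 0 \<and> vec_merge I h h' $ i \<noteq> 0"
      using DF_vec_merge[of f z a b I "vec_merge I u v" "vec_merge I v u"]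
      by (intro exI[of _ "vec_merge I u v"] exI[of _ "vec_merge I v u"]) simp
  next
    assume "\<exists>h h'. ?M *v h + ?C *v h' = 0 \<and> vec_merge I h h' $ i \<noteq> 0"
    then obtain h h' where "?M *v h + ?C *v h' = 0" "vec_merge I h h' $ i \<noteq> 0"
      by blast
    then show "\<exists>uv. DF f z a b uv = 0 \<and> fst uv $ i \<noteq> 0"
      by (intro exI[of _ "(vec_merge I h h', vec_merge I h' h)"]) (simp add: DF_vec_merge)
  qed
  also have "\<dots> \<longleftrightarrow> (i \<in> I \<longrightarrow> (\<exists>j. det (replace_column ?M i (column j ?C)) \<noteq> 0))"
  proof (cases "i \<in> I")
    case True
    then show ?thesis
      using kernel_coordinate_nonzero_iff[OF inv] by (simp add: vec_merge_def)
  next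
    case False
    obtain h where "?M *v h + ?C *v axis i 1 = 0"
      using invertible_kernel_exists[OF inv] by blast
    then have "\<exists>h h'. ?M *v h + ?C *v h' = 0 \<and> vec_merge I h h' $ i \<noteq> 0"
      using False by (intro exI[of _ h] exI[of _ "axis i 1"]) (simp add: vec_merge_def)
    then show ?thesis
      using False by simp
  qed
  finally show ?thesis .
qed

lemma well_balanced_zero_iff_det:
  assumes "balanced_zero f z a b" and inv: "invertible (jac_IJ f z I a b)"
  shows "well_balanced_zero f z a b \<longleftrightarrow>
    (\<forall>i\<in>I. \<exists>j. det (replace_column (jac_IJ f z I a b) i (column j (jac_IJ f z (- I) a b))) \<noteq> 0)"
proof -
  have "well_balanced_zero f z a b \<longleftrightarrow> (\<forall>i. \<exists>uv. DF f z a b uv = 0 \<and> fst uv $ i \<noteq> 0)"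
    using assms(1) by (simp add: well_balanced_zero_iff)
  also have "\<dots> \<longleftrightarrow>
      (\<forall>i\<in>I. \<exists>j. det (replace_column (jac_IJ f z I a b) i (column j (jac_IJ f z (- I) a b))) \<noteq> 0)"
    by (simp only: DF_kernel_coordinate_nonzero_iff[OF inv] Ball_def)
  finally show ?thesis .
qed

lemma open_balanced_zero_parameters:
  fixes f :: "'n::finite \<Rightarrow> ('n, 'r::finite) ipoly"
  shows "open {z. \<exists>a b. balanced_zero f z a b}"
proof (subst open_subopen, intro ballI)
  fix z0
  assume "z0 \<in> {z. \<exists>a b. balanced_zero f z a b}"
  then obtain a0 b0 I where balanced: "balanced_zero f z0 a0 b0"
    and inv: "invertible (jac_IJ f z0 I a0 b0)"
    by (auto simp: balanced_zero_def)
  obtain U a b where "open U" "z0 \<in> U"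
    "\<forall>z\<in>U. balanced_zero f z (a z) (b z) \<and> invertible (jac_IJ f z I (a z) (b z))"
    by (rule balanced_zero_continuation[OF balanced inv]) blast
  then show "\<exists>T. open T \<and> z0 \<in> T \<and> T \<subseteq> {z. \<exists>a b. balanced_zero f z a b}"
    by blast
qed

lemma open_well_balanced_zero_parameters:
  fixes f :: "'n::finite \<Rightarrow> ('n, 'r::finite) ipoly"
  shows "open {z. \<exists>a b. well_balanced_zero f z a b}"
proof (subst open_subopen, intro ballI)
  fix z0
  assume "z0 \<in> {z. \<exists>a b. well_balanced_zero f z a b}"
  then obtain a0 b0 where well_balanced: "well_balanced_zero f z0 a0 b0"
    by blast
  then have balanced: "balanced_zero f z0 a0 b0"
    by (simp add: well_balanced_zero_def)
  then obtain I where inv: "invertible (jac_IJ f z0 I a0 b0)"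
    by (auto simp: balanced_zero_def)
  obtain U a b where U: "open U" "z0 \<in> U" and cont: "continuous_on U a" "continuous_on U b"
    and init: "a z0 = a0" "b z0 = b0"
    and balanced_on: "\<forall>z\<in>U. balanced_zero f z (a z) (b z) \<and> invertible (jac_IJ f z I (a z) (b z))"
    using balanced_zero_continuation[OF balanced inv] by blast
  define R where "R i j z = det (replace_column (jac_IJ f z I (a z) (b z)) i
      (column j (jac_IJ f z (- I) (a z) (b z))))" for i j z
  define T where "T = U \<inter> (\<Inter>i\<in>I. \<Union>j. {z \<in> U. R i j z \<noteq> 0})"
  have "continuous_on U (\<lambda>z. replace_column (jac_IJ f z I (a z) (b z)) i
      (column j (jac_IJ f z (- I) (a z) (b z))) $ r $ c)" for i j r c
    by (cases "c = i") (simp_all add: column_def continuous_on_jac_IJ[OF cont])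
  then have "continuous_on U (R i j)" for i j
    unfolding R_def by (rule continuous_on_det)
  then have "open T"
    unfolding T_def using U(1)
    by (intro open_Int open_INT open_UN ballI open_Collect_nonzero_on) simp_all
  moreover have "z0 \<in> T"
    using well_balanced well_balanced_zero_iff_det[OF balanced inv] U(2)
    unfolding T_def R_def by (simp add: init)
  moreover have "T \<subseteq> {z. \<exists>a b. well_balanced_zero f z a b}"
  proof
    fix z
    assume "z \<in> T"
    then have "z \<in> U" and dets: "\<forall>i\<in>I. \<exists>j. R i j z \<noteq> 0"
      unfolding T_def by blast+
    then have "balanced_zero f z (a z) (b z)" "invertible (jac_IJ f z I (a z) (b z))"
      using balanced_on by blast+
    then have "well_balanced_zero f z (a z) (b z)"
      using dets by (simp add: well_balanced_zero_iff_det R_def)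
    then show "z \<in> {z. \<exists>a b. well_balanced_zero f z a b}"
      by blast
  qed
  ultimately show "\<exists>T. open T \<and> z0 \<in> T \<and> T \<subseteq> {z. \<exists>a b. well_balanced_zero f z a b}"
    by blast
qed

theorem proposition1:
  fixes f :: "'n::finite \<Rightarrow> ('n, 'r::finite) ipoly"
  shows "open {z :: complex^'r. \<exists>a b. balanced_zero f z a b}
       \<and> open {z :: complex^'r. \<exists>a b. well_balanced_zero f z a b}"
  using open_balanced_zero_parameters open_well_balanced_zero_parameters by blast

end
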